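(* Let $T=(\{T_g\}_{g\in G},\{\gamma_{g,h}\}_{g,h\in G},u)$ be an action of a group $G$ on a semigroupal category $\mathcal{C}$ and let $\mathcal{I}$ be an ideal of $\mathcal{C}$. Put $\mathcal{C}_g=\mathcal{I}\cap\overline{T_g(\mathcal{I})}$, let $S_g=T_g|_{\mathcal{C}_{g^{-1}}}\colon\mathcal{C}_{g^{-1}}\to\mathcal{C}_g$, and let $\gamma_{g,h}\colon S_gS_h\Rightarrow S_{gh}$ be the restriction of $\gamma_{g,h}$ (to $\mathcal{C}_{h^{-1}}\cap\mathcal{C}_{h^{-1}g^{-1}}$). Then these data (together with $u$ restricted to $\mathcal{I}$) define a partial action of $G$ on the semigroupal category $\mathcal{I}$.
   Context: A semigroupal category is a (strict) category with a tensor functor and associator satisfying the pentagon axiom. For a subcategory $\mathcal{D}$, $\overline{\mathcal{D}}$ is the smallest subcategory containing $\mathcal{D}$ closed under isomorphisms (containing, with any object $X$, every isomorphism $X\to X'$ of $\mathcal{C}$ and its target). An ideal is a subcategory closed under isomorphisms such that $X\otimes Y$, $Y\otimes X$ are objects of it whenever $X$ is and $Y$ is any object. An action of $G$ (unit $e$) on $\mathcal{C}$: semigroupal auto-equivalences $T_g$ of $\mathcal{C}$, natural isomorphisms of semigroupal functors $\gamma_{g,h}\colon T_gT_h\Rightarrow T_{gh}$, $u\colon\mathrm{Id}_{\mathcal{C}}\Rightarrow T_e$, with $(\gamma_{gh,k})_X\circ(\gamma_{g,h})_{T_k(X)}=(\gamma_{g,hk})_X\circ T_g((\gamma_{h,k})_X)$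 and with $u_{T_g(X)}$, $(\gamma_{e,g})_X$ mutually inverse and $T_g(u_X)$, $(\gamma_{g,e})_X$ mutually inverse. A partial action of $G$ on a semigroupal category $\mathcal{A}$ is a triple $(\{T_g\},\{\gamma_{g,h}\},u)$ with ideals $\mathcal{A}_g$ of $\mathcal{A}$ such that: (1) $(T_g,J^g)\colon\mathcal{A}_{g^{-1}}\to\mathcal{A}_g$ is a semigroupal equivalence; (2) $\mathcal{A}_e=\mathcal{A}$ and $u\colon\mathrm{Id}_{\mathcal{A}}\Rightarrow T_e$ is a natural isomorphism of semigroupal functors; (3) the restriction of $T_g$ to $\mathcal{A}_{g^{-1}}\cap\mathcal{A}_h$ is a semigroupal equivalence onto $\mathcal{A}_g\cap\mathcal{A}_{gh}$; (4) $\gamma_{g,h}\colon T_gT_h\Rightarrow T_{gh}$ is a natural isomorphism of functors $\mathcal{A}_{h^{-1}}\cap\mathcal{A}_{h^{-1}g^{-1}}\to\mathcal{A}_g\cap\mathcal{A}_{gh}$ compatible with the $J$'s, i.e. $J^{gh}_{X,Y}((\gamma_{g,h})_X\otimes(\gamma_{g,h})_Y)=(\gamma_{g,h})_{X\otimes Y}T_g(J^h_{X,Y})J^g_{T_hX,T_hY}$; such that $(\gamma_{gh,k})_X(\gamma_{g,h})_{T_k(X)}=(\gamma_{g,hk})_XT_g((\gamma_{h,k})_X)$ for $X\in\mathcal{A}_{k^{-1}}\cap\mathcal{A}_{k^{-1}h^{-1}}\cap\mathcal{A}_{k^{-1}h^{-1}g^{-1}}$, and for $X\in\mathcal{A}_{g^{-1}}$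 the morphisms $u_{T_g(X)}$, $(\gamma_{e,g})_X$ are mutually inverse, as are $T_g(u_X)$, $(\gamma_{g,e})_X$. *)

theory Defs
  imports "HOL-Algebra.Group"
begin

record ('o,'m) cat =
  Ob  :: "'o set"
  Ar  :: "'m set"
  Dom :: "'m \<Rightarrow> 'o"
  Cod :: "'m \<Rightarrow> 'o"
  Cmp :: "'m \<Rightarrow> 'm \<Rightarrow> 'm"   (* Cmp C g f = g \<circ> f *)
  Idt :: "'o \<Rightarrow> 'm"

definition category :: "('o,'m,'x) cat_scheme \<Rightarrow> bool" where
  "category C \<longleftrightarrow>
     (\<forall>f\<in>Ar C. Dom C f \<in> Ob C \<and> Cod C f \<in> Ob C) \<and>
     (\<forall>X\<in>Ob C. Idt C X \<in> Ar C \<and> Dom C (Idt C X) = X \<and> Cod C (Idt C X) = X) \<and>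
     (\<forall>f\<in>Ar C. \<forall>g\<in>Ar C. Cod C f = Dom C g \<longrightarrow>
        Cmp C g f \<in> Ar C \<and> Dom C (Cmp C g f) = Dom C f \<and> Cod C (Cmp C g f) = Cod C g) \<and>
     (\<forall>f\<in>Ar C. Cmp C (Idt C (Cod C f)) f = f \<and> Cmp C f (Idt C (Dom C f)) = f) \<and>
     (\<forall>f\<in>Ar C. \<forall>g\<in>Ar C. \<forall>h\<in>Ar C. Cod C f = Dom C g \<longrightarrow> Cod C g = Dom C h \<longrightarrow>
        Cmp C h (Cmp C g f) = Cmp C (Cmp C h g) f)"

definition chom :: "('o,'m,'x) cat_scheme \<Rightarrow> 'o \<Rightarrow> 'o \<Rightarrow> 'm set" where
  "chom C X Y = {f \<in> Ar C. Dom C f = X \<and> Cod C f = Y}"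

definition cat_iso :: "('o,'m,'x) cat_scheme \<Rightarrow> 'm \<Rightarrow> bool" where
  "cat_iso C f \<longleftrightarrow> f \<in> Ar C \<and>
     (\<exists>g\<in>chom C (Cod C f) (Dom C f).
        Cmp C g f = Idt C (Dom C f) \<and> Cmp C f g = Idt C (Cod C f))"

record ('o,'m) scat = "('o,'m) cat" +
  Tob :: "'o \<Rightarrow> 'o \<Rightarrow> 'o"
  Tar :: "'m \<Rightarrow> 'm \<Rightarrow> 'm"
  Asc :: "'o \<Rightarrow> 'o \<Rightarrow> 'o \<Rightarrow> 'm"    (* associator (X\<otimes>Y)\<otimes>Z \<rightarrow> X\<otimes>(Y\<otimes>Z) *)

definition semigroupal :: "('o,'m,'x) scat_scheme \<Rightarrow> bool" where
  "semigroupal C \<longleftrightarrow> category C \<and>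
     \<comment> \<open>tensor is a bifunctor\<close>
     (\<forall>X\<in>Ob C. \<forall>Y\<in>Ob C. Tob C X Y \<in> Ob C \<and> Tar C (Idt C X) (Idt C Y) = Idt C (Tob C X Y)) \<and>
     (\<forall>f\<in>Ar C. \<forall>g\<in>Ar C. Tar C f g \<in> chom C (Tob C (Dom C f) (Dom C g)) (Tob C (Cod C f) (Cod C g))) \<and>
     (\<forall>f\<in>Ar C. \<forall>f'\<in>Ar C. \<forall>g\<in>Ar C. \<forall>g'\<in>Ar C. Cod C f = Dom C g \<longrightarrow> Cod C f' = Dom C g' \<longrightarrow>
        Tar C (Cmp C g f) (Cmp C g' f') = Cmp C (Tar C g g') (Tar C f f')) \<and>
     \<comment> \<open>associator: natural isomorphism\<close>
     (\<forall>X\<in>Ob C. \<forall>Y\<in>Ob C. \<forall>Z\<in>Ob C.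
        Asc C X Y Z \<in> chom C (Tob C (Tob C X Y) Z) (Tob C X (Tob C Y Z)) \<and> cat_iso C (Asc C X Y Z)) \<and>
     (\<forall>f\<in>Ar C. \<forall>g\<in>Ar C. \<forall>h\<in>Ar C.
        Cmp C (Asc C (Cod C f) (Cod C g) (Cod C h)) (Tar C (Tar C f g) h) =
        Cmp C (Tar C f (Tar C g h)) (Asc C (Dom C f) (Dom C g) (Dom C h))) \<and>
     \<comment> \<open>pentagon\<close>
     (\<forall>W\<in>Ob C. \<forall>X\<in>Ob C. \<forall>Y\<in>Ob C. \<forall>Z\<in>Ob C.
        Cmp C (Tar C (Idt C W) (Asc C X Y Z))
          (Cmp C (Asc C W (Tob C X Y) Z) (Tar C (Asc C W X Y) (Idt C Z))) =
        Cmp C (Asc C W X (Tob C Y Z)) (Asc C (Tob C W X) Y Z))"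

definition subcat :: "('o,'m,'x) cat_scheme \<Rightarrow> 'o set \<times> 'm set \<Rightarrow> ('o,'m,'x) cat_scheme" where
  "subcat C D = C\<lparr>Ob := fst D, Ar := snd D\<rparr>"

definition is_subcategory :: "('o,'m,'x) cat_scheme \<Rightarrow> 'o set \<times> 'm set \<Rightarrow> bool" where
  "is_subcategory C D \<longleftrightarrow> fst D \<subseteq> Ob C \<and> snd D \<subseteq> Ar C \<and>
     (\<forall>f\<in>snd D. Dom C f \<in> fst D \<and> Cod C f \<in> fst D) \<and>
     (\<forall>X\<in>fst D. Idt C X \<in> snd D) \<and>
     (\<forall>f\<in>snd D. \<forall>g\<in>snd D. Cod C f = Dom C g \<longrightarrow> Cmp C g f \<in> snd D)"

definition iso_closed :: "('o,'m,'x) cat_scheme \<Rightarrow> 'o set \<times> 'm set \<Rightarrow> bool" where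
  "iso_closed C D \<longleftrightarrow>
     (\<forall>X\<in>fst D. \<forall>f. cat_iso C f \<and> Dom C f = X \<longrightarrow> f \<in> snd D \<and> Cod C f \<in> fst D)"

definition sc_inter :: "'o set \<times> 'm set \<Rightarrow> 'o set \<times> 'm set \<Rightarrow> 'o set \<times> 'm set" where
  "sc_inter D E = (fst D \<inter> fst E, snd D \<inter> snd E)"

definition iso_closure :: "('o,'m,'x) cat_scheme \<Rightarrow> 'o set \<times> 'm set \<Rightarrow> 'o set \<times> 'm set" where
  "iso_closure C D =
     (let \<E> = {E. is_subcategory C E \<and> iso_closed C E \<and> fst D \<subseteq> fst E \<and> snd D \<subseteq> snd E}
      in (\<Inter>(fst ` \<E>), \<Inter>(snd ` \<E>)))"

definition sc_ideal :: "('o,'m,'x) scat_scheme \<Rightarrow> 'o set \<times> 'm set \<Rightarrow> bool" where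
  "sc_ideal C D \<longleftrightarrow> is_subcategory C D \<and> iso_closed C D \<and>
     (\<forall>f\<in>Ar C. Dom C f \<in> fst D \<and> Cod C f \<in> fst D \<longrightarrow> f \<in> snd D) \<and>
     (\<forall>X\<in>fst D. \<forall>Y\<in>Ob C. Tob C X Y \<in> fst D \<and> Tob C Y X \<in> fst D)"

record ('o,'m) sfun =
  FO :: "'o \<Rightarrow> 'o"
  FA :: "'m \<Rightarrow> 'm"
  FJ :: "'o \<Rightarrow> 'o \<Rightarrow> 'm"   (* J_{X,Y} : F X \<otimes> F Y \<rightarrow> F (X \<otimes> Y) *)

definition sf_image :: "('o,'m) sfun \<Rightarrow> 'o set \<times> 'm set \<Rightarrow> 'o set \<times> 'm set" where
  "sf_image F D = (FO F ` fst D, FA F ` snd D)"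

definition is_functor :: "('o,'m,'x) cat_scheme \<Rightarrow> ('o,'m,'y) cat_scheme \<Rightarrow> ('o,'m) sfun \<Rightarrow> bool" where
  "is_functor C D F \<longleftrightarrow>
     (\<forall>X\<in>Ob C. FO F X \<in> Ob D \<and> FA F (Idt C X) = Idt D (FO F X)) \<and>
     (\<forall>f\<in>Ar C. FA F f \<in> chom D (FO F (Dom C f)) (FO F (Cod C f))) \<and>
     (\<forall>f\<in>Ar C. \<forall>g\<in>Ar C. Cod C f = Dom C g \<longrightarrow> FA F (Cmp C g f) = Cmp D (FA F g) (FA F f))"

definition sg_functor :: "('o,'m,'x) scat_scheme \<Rightarrow> ('o,'m,'y) scat_scheme \<Rightarrow> ('o,'m) sfun \<Rightarrow> bool" where
  "sg_functor C D F \<longleftrightarrow> is_functor C D F \<and>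
     (\<forall>X\<in>Ob C. \<forall>Y\<in>Ob C.
        FJ F X Y \<in> chom D (Tob D (FO F X) (FO F Y)) (FO F (Tob C X Y)) \<and> cat_iso D (FJ F X Y)) \<and>
     (\<forall>f\<in>Ar C. \<forall>g\<in>Ar C.
        Cmp D (FJ F (Cod C f) (Cod C g)) (Tar D (FA F f) (FA F g)) =
        Cmp D (FA F (Tar C f g)) (FJ F (Dom C f) (Dom C g))) \<and>
     (\<forall>X\<in>Ob C. \<forall>Y\<in>Ob C. \<forall>Z\<in>Ob C.
        Cmp D (FA F (Asc C X Y Z))
          (Cmp D (FJ F (Tob C X Y) Z) (Tar D (FJ F X Y) (Idt D (FO F Z)))) =
        Cmp D (FJ F X (Tob C Y Z))
          (Cmp D (Tar D (Idt D (FO F X)) (FJ F Y Z)) (Asc D (FO F X) (FO F Y) (FO F Z))))"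

definition sg_equiv :: "('o,'m,'x) scat_scheme \<Rightarrow> ('o,'m,'y) scat_scheme \<Rightarrow> ('o,'m) sfun \<Rightarrow> bool" where
  "sg_equiv C D F \<longleftrightarrow> sg_functor C D F \<and>
     (\<forall>X\<in>Ob C. \<forall>Y\<in>Ob C. \<forall>g\<in>chom D (FO F X) (FO F Y). \<exists>f\<in>chom C X Y. FA F f = g) \<and>
     (\<forall>X\<in>Ob C. \<forall>Y\<in>Ob C. \<forall>f\<in>chom C X Y. \<forall>f'\<in>chom C X Y. FA F f = FA F f' \<longrightarrow> f = f') \<and>
     (\<forall>Y\<in>Ob D. \<exists>X\<in>Ob C. \<exists>i\<in>chom D (FO F X) Y. cat_iso D i)"

definition id_sf :: "('o,'m,'x) scat_scheme \<Rightarrow> ('o,'m) sfun" where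
  "id_sf C = \<lparr>FO = (\<lambda>X. X), FA = (\<lambda>f. f), FJ = (\<lambda>X Y. Idt C (Tob C X Y))\<rparr>"

definition comp_sf :: "('o,'m,'x) scat_scheme \<Rightarrow> ('o,'m) sfun \<Rightarrow> ('o,'m) sfun \<Rightarrow> ('o,'m) sfun" where
  "comp_sf C F G = \<lparr>FO = FO F \<circ> FO G, FA = FA F \<circ> FA G,
     FJ = (\<lambda>X Y. Cmp C (FA F (FJ G X Y)) (FJ F (FO G X) (FO G Y)))\<rparr>"

definition nat_iso :: "('o,'m,'x) cat_scheme \<Rightarrow> ('o,'m,'y) cat_scheme \<Rightarrow> ('o,'m) sfun \<Rightarrow> ('o,'m) sfun \<Rightarrow> ('o \<Rightarrow> 'm) \<Rightarrow> bool" where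
  "nat_iso C D F F' \<eta> \<longleftrightarrow>
     (\<forall>X\<in>Ob C. \<eta> X \<in> chom D (FO F X) (FO F' X) \<and> cat_iso D (\<eta> X)) \<and>
     (\<forall>f\<in>Ar C. Cmp D (\<eta> (Cod C f)) (FA F f) = Cmp D (FA F' f) (\<eta> (Dom C f)))"

definition sg_nat_iso :: "('o,'m,'x) scat_scheme \<Rightarrow> ('o,'m,'y) scat_scheme \<Rightarrow> ('o,'m) sfun \<Rightarrow> ('o,'m) sfun \<Rightarrow> ('o \<Rightarrow> 'm) \<Rightarrow> bool" where
  "sg_nat_iso C D F F' \<eta> \<longleftrightarrow> nat_iso C D F F' \<eta> \<and>
     (\<forall>X\<in>Ob C. \<forall>Y\<in>Ob C.
        Cmp D (FJ F' X Y) (Tar D (\<eta> X) (\<eta> Y)) = Cmp D (\<eta> (Tob C X Y)) (FJ F X Y))"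

definition sg_action ::
  "('g,'b) monoid_scheme \<Rightarrow> ('o,'m,'x) scat_scheme \<Rightarrow> ('g \<Rightarrow> ('o,'m) sfun) \<Rightarrow>
   ('g \<Rightarrow> 'g \<Rightarrow> 'o \<Rightarrow> 'm) \<Rightarrow> ('o \<Rightarrow> 'm) \<Rightarrow> bool" where
  "sg_action G C T \<gamma> u \<longleftrightarrow>
     (\<forall>g\<in>carrier G. sg_equiv C C (T g)) \<and>
     (\<forall>g\<in>carrier G. \<forall>h\<in>carrier G.
        sg_nat_iso C C (comp_sf C (T g) (T h)) (T (g \<otimes>\<^bsub>G\<^esub> h)) (\<gamma> g h)) \<and>
     sg_nat_iso C C (id_sf C) (T \<one>\<^bsub>G\<^esub>) u \<and>
     (\<forall>g\<in>carrier G. \<forall>h\<in>carrier G. \<forall>k\<in>carrier G. \<forall>X\<in>Ob C.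
        Cmp C (\<gamma> (g \<otimes>\<^bsub>G\<^esub> h) k X) (\<gamma> g h (FO (T k) X)) =
        Cmp C (\<gamma> g (h \<otimes>\<^bsub>G\<^esub> k) X) (FA (T g) (\<gamma> h k X))) \<and>
     (\<forall>g\<in>carrier G. \<forall>X\<in>Ob C.
        Cmp C (u (FO (T g) X)) (\<gamma> \<one>\<^bsub>G\<^esub> g X) = Idt C (FO (T \<one>\<^bsub>G\<^esub>) (FO (T g) X)) \<and>
        Cmp C (\<gamma> \<one>\<^bsub>G\<^esub> g X) (u (FO (T g) X)) = Idt C (FO (T g) X) \<and>
        Cmp C (FA (T g) (u X)) (\<gamma> g \<one>\<^bsub>G\<^esub> X) = Idt C (FO (T g) (FO (T \<one>\<^bsub>G\<^esub>) X)) \<and>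
        Cmp C (\<gamma> g \<one>\<^bsub>G\<^esub> X) (FA (T g) (u X)) = Idt C (FO (T g) X))"

definition partial_action ::
  "('g,'b) monoid_scheme \<Rightarrow> ('o,'m,'x) scat_scheme \<Rightarrow> ('g \<Rightarrow> 'o set \<times> 'm set) \<Rightarrow>
   ('g \<Rightarrow> ('o,'m) sfun) \<Rightarrow> ('g \<Rightarrow> 'g \<Rightarrow> 'o \<Rightarrow> 'm) \<Rightarrow> ('o \<Rightarrow> 'm) \<Rightarrow> bool" where
  "partial_action G A Ag T \<gamma> u \<longleftrightarrow> semigroupal A \<and>
     (\<forall>g\<in>carrier G. sc_ideal A (Ag g)) \<and>
     \<comment> \<open>(1)\<close>
     (\<forall>g\<in>carrier G. sg_equiv (subcat A (Ag (inv\<^bsub>G\<^esub> g))) (subcat A (Ag g)) (T g)) \<and>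
     \<comment> \<open>(2)\<close>
     Ag \<one>\<^bsub>G\<^esub> = (Ob A, Ar A) \<and>
     sg_nat_iso A A (id_sf A) (T \<one>\<^bsub>G\<^esub>) u \<and>
     \<comment> \<open>(3)\<close>
     (\<forall>g\<in>carrier G. \<forall>h\<in>carrier G.
        sg_equiv (subcat A (sc_inter (Ag (inv\<^bsub>G\<^esub> g)) (Ag h)))
                 (subcat A (sc_inter (Ag g) (Ag (g \<otimes>\<^bsub>G\<^esub> h)))) (T g)) \<and>
     \<comment> \<open>(4)\<close>
     (\<forall>g\<in>carrier G. \<forall>h\<in>carrier G.
        sg_nat_iso (subcat A (sc_inter (Ag (inv\<^bsub>G\<^esub> h)) (Ag (inv\<^bsub>G\<^esub> h \<otimes>\<^bsub>G\<^esub> inv\<^bsub>G\<^esub> g))))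
                   (subcat A (sc_inter (Ag g) (Ag (g \<otimes>\<^bsub>G\<^esub> h))))
                   (comp_sf A (T g) (T h)) (T (g \<otimes>\<^bsub>G\<^esub> h)) (\<gamma> g h)) \<and>
     (\<forall>g\<in>carrier G. \<forall>h\<in>carrier G. \<forall>k\<in>carrier G.
        \<forall>X\<in>fst (Ag (inv\<^bsub>G\<^esub> k)) \<inter> fst (Ag (inv\<^bsub>G\<^esub> k \<otimes>\<^bsub>G\<^esub> inv\<^bsub>G\<^esub> h))
              \<inter> fst (Ag (inv\<^bsub>G\<^esub> k \<otimes>\<^bsub>G\<^esub> inv\<^bsub>G\<^esub> h \<otimes>\<^bsub>G\<^esub> inv\<^bsub>G\<^esub> g)).
        Cmp A (\<gamma> (g \<otimes>\<^bsub>G\<^esub> h) k X) (\<gamma> g h (FO (T k) X)) =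
        Cmp A (\<gamma> g (h \<otimes>\<^bsub>G\<^esub> k) X) (FA (T g) (\<gamma> h k X))) \<and>
     (\<forall>g\<in>carrier G. \<forall>X\<in>fst (Ag (inv\<^bsub>G\<^esub> g)).
        Cmp A (u (FO (T g) X)) (\<gamma> \<one>\<^bsub>G\<^esub> g X) = Idt A (FO (T \<one>\<^bsub>G\<^esub>) (FO (T g) X)) \<and>
        Cmp A (\<gamma> \<one>\<^bsub>G\<^esub> g X) (u (FO (T g) X)) = Idt A (FO (T g) X) \<and>
        Cmp A (FA (T g) (u X)) (\<gamma> g \<one>\<^bsub>G\<^esub> X) = Idt A (FO (T g) (FO (T \<one>\<^bsub>G\<^esub>) X)) \<and>
        Cmp A (\<gamma> g \<one>\<^bsub>G\<^esub> X) (FA (T g) (u X)) = Idt A (FO (T g) X))"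

end

theory Submission
  imports Defs
begin

text \<open>
  Since the ideal I is closed under isomorphisms and T_g T_(g^-1) is isomorphic to the
  identity, an object Y of I lies in the closure of T_g(I) exactly when T_(g^-1) Y lies in I.
  Hence C_g is the full subcategory on these objects, and every axiom of a partial action
  becomes a statement about the global action restricted to full subcategories: T_g maps
  C_(g^-1) \<inter> C_h into C_g \<inter> C_gh because T_a T_b is isomorphic to T_ab, it is essentially
  surjective there with preimage T_(g^-1) Y, and the coherence conditions for \<gamma> and u are
  inherited verbatim.
\<close>

section \<open>Isomorphic objects\<close>

definition isomorphic :: "('o,'m,'x) cat_scheme \<Rightarrow> 'o \<Rightarrow> 'o \<Rightarrow> bool" where
  "isomorphic C X Y \<longleftrightarrow> (\<exists>i. cat_iso C i \<and> Dom C i = X \<and> Cod C i = Y)"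

lemma cat_iso_Ar: "cat_iso C f \<Longrightarrow> f \<in> Ar C"
  unfolding cat_iso_def by blast

context
  fixes C :: "('o,'m,'x) cat_scheme"
  assumes cat: "category C"
begin

lemma cat_Dom_Ob: "f \<in> Ar C \<Longrightarrow> Dom C f \<in> Ob C"
  and cat_Cod_Ob: "f \<in> Ar C \<Longrightarrow> Cod C f \<in> Ob C"
  and cat_Idt: "X \<in> Ob C \<Longrightarrow> Idt C X \<in> chom C X X"
  and cat_Cmp: "f \<in> chom C X Y \<Longrightarrow> g \<in> chom C Y Z \<Longrightarrow> Cmp C g f \<in> chom C X Z"
  and cat_Idt_left: "f \<in> chom C X Y \<Longrightarrow> Cmp C (Idt C Y) f = f"
  and cat_Idt_right: "f \<in> chom C X Y \<Longrightarrow> Cmp C f (Idt C X) = f"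
  and cat_Cmp_assoc: "f \<in> chom C W X \<Longrightarrow> g \<in> chom C X Y \<Longrightarrow> h \<in> chom C Y Z \<Longrightarrow>
     Cmp C h (Cmp C g f) = Cmp C (Cmp C h g) f"
  using cat unfolding category_def chom_def by auto

lemma cat_iso_inverse:
  assumes "cat_iso C f"
  obtains g where "cat_iso C g" "g \<in> chom C (Cod C f) (Dom C f)"
    "Cmp C g f = Idt C (Dom C f)" "Cmp C f g = Idt C (Cod C f)"
proof -
  from assms obtain g where g: "g \<in> chom C (Cod C f) (Dom C f)"
    "Cmp C g f = Idt C (Dom C f)" "Cmp C f g = Idt C (Cod C f)"
    unfolding cat_iso_def by blast
  with assms have "cat_iso C g"
    unfolding cat_iso_def chom_def by auto
  with g that show ?thesis by blast
qed

lemma cat_iso_chom: "cat_iso C f \<Longrightarrow> f \<in> chom C (Dom C f) (Cod C f)"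
  unfolding cat_iso_def chom_def by blast

lemma cat_iso_Idt: "X \<in> Ob C \<Longrightarrow> cat_iso C (Idt C X)"
  using cat_Idt cat_Idt_left unfolding cat_iso_def chom_def by fastforce

lemma cat_iso_Cmp:
  assumes f: "cat_iso C f" and g: "cat_iso C g" and fg: "Cod C f = Dom C g"
  shows "cat_iso C (Cmp C g f)"
proof -
  define X Y Z where "X = Dom C f" and "Y = Cod C f" and "Z = Cod C g"
  have f_hom: "f \<in> chom C X Y"
    unfolding X_def Y_def by (rule cat_iso_chom[OF f])
  have g_hom: "g \<in> chom C Y Z"
    unfolding Y_def Z_def fg by (rule cat_iso_chom[OF g])
  obtain f' where f': "f' \<in> chom C Y X" "Cmp C f' f = Idt C X" "Cmp C f f' = Idt C Y"
    using cat_iso_inverse[OF f] unfolding X_def Y_def by blast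
  obtain g' where g': "g' \<in> chom C Z Y" "Cmp C g' g = Idt C Y" "Cmp C g g' = Idt C Z"
    using cat_iso_inverse[OF g] fg unfolding Y_def Z_def by metis
  have "Cmp C (Cmp C f' g') (Cmp C g f) = Cmp C f' (Cmp C g' (Cmp C g f))"
    by (rule cat_Cmp_assoc[OF cat_Cmp[OF f_hom g_hom] g'(1) f'(1), symmetric])
  also have "\<dots> = Cmp C f' (Cmp C (Cmp C g' g) f)"
    by (simp only: cat_Cmp_assoc[OF f_hom g_hom g'(1)])
  also have "\<dots> = Idt C X"
    by (simp only: g'(2) cat_Idt_left[OF f_hom] f'(2))
  finally have left: "Cmp C (Cmp C f' g') (Cmp C g f) = Idt C X" .
  have "Cmp C (Cmp C g f) (Cmp C f' g') = Cmp C g (Cmp C f (Cmp C f' g'))"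
    by (rule cat_Cmp_assoc[OF cat_Cmp[OF g'(1) f'(1)] f_hom g_hom, symmetric])
  also have "\<dots> = Cmp C g (Cmp C (Cmp C f f') g')"
    by (simp only: cat_Cmp_assoc[OF g'(1) f'(1) f_hom])
  also have "\<dots> = Idt C Z"
    by (simp only: f'(3) cat_Idt_left[OF g'(1)] g'(3))
  finally have right: "Cmp C (Cmp C g f) (Cmp C f' g') = Idt C Z" .
  have gf: "Cmp C g f \<in> Ar C" "Dom C (Cmp C g f) = X" "Cod C (Cmp C g f) = Z"
    using cat_Cmp[OF f_hom g_hom] unfolding chom_def by simp_all
  show ?thesis
    unfolding cat_iso_def gf(2,3)
    using gf(1) cat_Cmp[OF g'(1) f'(1)] left right by blast
qed

lemma isomorphic_Ob: "isomorphic C X Y \<Longrightarrow> X \<in> Ob C \<and> Y \<in> Ob C"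
  unfolding isomorphic_def by (auto dest: cat_iso_Ar intro: cat_Dom_Ob cat_Cod_Ob)

lemma isomorphic_refl: "X \<in> Ob C \<Longrightarrow> isomorphic C X X"
  unfolding isomorphic_def using cat_iso_Idt cat_Idt[of X] unfolding chom_def by auto

lemma isomorphic_sym:
  assumes "isomorphic C X Y"
  shows "isomorphic C Y X"
proof -
  obtain i where i: "cat_iso C i" "Dom C i = X" "Cod C i = Y"
    using assms unfolding isomorphic_def by blast
  obtain j where "cat_iso C j" "j \<in> chom C (Cod C i) (Dom C i)"
    by (rule cat_iso_inverse[OF i(1)])
  with i show ?thesis
    unfolding isomorphic_def chom_def by auto
qed

lemma isomorphic_trans:
  assumes "isomorphic C X Y" "isomorphic C Y Z"
  shows "isomorphic C X Z"
proof -
  obtain i where i: "cat_iso C i" "Dom C i = X" "Cod C i = Y"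
    using assms(1) unfolding isomorphic_def by blast
  obtain j where j: "cat_iso C j" "Dom C j = Y" "Cod C j = Z"
    using assms(2) unfolding isomorphic_def by blast
  have "Cmp C j i \<in> chom C X Z"
    using cat_Cmp[of i X Y j Z] cat_iso_chom[OF i(1)] cat_iso_chom[OF j(1)] i j by simp
  moreover have "cat_iso C (Cmp C j i)"
    using cat_iso_Cmp[OF i(1) j(1)] i j by simp
  ultimately show ?thesis
    unfolding isomorphic_def chom_def by blast
qed

lemma cat_conjugate_by_isos:
  assumes i: "cat_iso C i" "i \<in> chom C X Y" and j: "cat_iso C j" "j \<in> chom C X' Y'"
    and h: "h \<in> chom C Y Y'"
  obtains i' k where "cat_iso C i'" "i' \<in> chom C Y X" "k \<in> chom C X X'"
    "h = Cmp C j (Cmp C k i')"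
proof -
  obtain i' where i': "cat_iso C i'" "i' \<in> chom C Y X" "Cmp C i i' = Idt C Y"
    using cat_iso_inverse[OF i(1)] i(2) unfolding chom_def by auto
  obtain j' where j': "j' \<in> chom C Y' X'" "Cmp C j j' = Idt C Y'"
    using cat_iso_inverse[OF j(1)] j(2) unfolding chom_def by auto
  define k where "k = Cmp C (Cmp C j' h) i"
  have j'h: "Cmp C j' h \<in> chom C Y X'"
    using cat_Cmp[OF h j'(1)] .
  have "k \<in> chom C X X'"
    unfolding k_def using cat_Cmp[OF i(2) j'h] .
  moreover have "Cmp C j (Cmp C k i') = h"
  proof -
    have "Cmp C k i' = Cmp C (Cmp C j' h) (Cmp C i i')"
      unfolding k_def by (rule cat_Cmp_assoc[OF i'(2) i(2) j'h, symmetric])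
    also have "\<dots> = Cmp C j' h"
      unfolding i'(3) by (rule cat_Idt_right[OF j'h])
    finally have "Cmp C j (Cmp C k i') = Cmp C j (Cmp C j' h)"
      by simp
    also have "\<dots> = Cmp C (Cmp C j j') h"
      by (rule cat_Cmp_assoc[OF h j'(1) j(2)])
    also have "\<dots> = h"
      unfolding j'(2) by (rule cat_Idt_left[OF h])
    finally show ?thesis .
  qed
  ultimately show ?thesis
    using that i' by blast
qed

end

lemma iso_closed_isomorphic: "iso_closed C D \<Longrightarrow> X \<in> fst D \<Longrightarrow> isomorphic C X Y \<Longrightarrow> Y \<in> fst D"
  unfolding iso_closed_def isomorphic_def by blast

lemma functor_cat_iso:
  assumes cat: "category C" and F: "is_functor C D F" and f: "cat_iso C f"
  shows "cat_iso D (FA F f)"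
proof -
  obtain g where g: "g \<in> chom C (Cod C f) (Dom C f)"
    "Cmp C g f = Idt C (Dom C f)" "Cmp C f g = Idt C (Cod C f)"
    using cat_iso_inverse[OF cat f] by blast
  have f_hom: "f \<in> chom C (Dom C f) (Cod C f)"
    using cat_iso_chom[OF cat f] .
  have FA_hom: "\<And>h X Y. h \<in> chom C X Y \<Longrightarrow> FA F h \<in> chom D (FO F X) (FO F Y)"
    and FA_Idt: "\<And>X. X \<in> Ob C \<Longrightarrow> FA F (Idt C X) = Idt D (FO F X)"
    and FA_Cmp: "\<And>h k X Y Z. h \<in> chom C X Y \<Longrightarrow> k \<in> chom C Y Z \<Longrightarrow>
        FA F (Cmp C k h) = Cmp D (FA F k) (FA F h)"
    using F unfolding is_functor_def chom_def by auto
  have "Cmp D (FA F g) (FA F f) = Idt D (FO F (Dom C f))"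
    using FA_Cmp[OF f_hom g(1)] g(2) FA_Idt cat_Dom_Ob[OF cat] f_hom unfolding chom_def by auto
  moreover have "Cmp D (FA F f) (FA F g) = Idt D (FO F (Cod C f))"
    using FA_Cmp[OF g(1) f_hom] g(3) FA_Idt cat_Cod_Ob[OF cat] f_hom unfolding chom_def by auto
  ultimately show ?thesis
    using FA_hom[OF f_hom] FA_hom[OF g(1)] unfolding cat_iso_def chom_def by auto
qed

lemma functor_isomorphic:
  assumes cat: "category C" and F: "is_functor C D F" and XY: "isomorphic C X Y"
  shows "isomorphic D (FO F X) (FO F Y)"
proof -
  obtain i where "cat_iso C i" "i \<in> chom C X Y"
    using XY cat_iso_chom[OF cat] unfolding isomorphic_def by blast
  then have "cat_iso D (FA F i)" "FA F i \<in> chom D (FO F X) (FO F Y)"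
    using functor_cat_iso[OF cat F] F unfolding is_functor_def chom_def by auto
  then show ?thesis
    unfolding isomorphic_def chom_def by blast
qed

lemma nat_iso_isomorphic: "nat_iso C D F F' \<eta> \<Longrightarrow> X \<in> Ob C \<Longrightarrow> isomorphic D (FO F X) (FO F' X)"
  unfolding nat_iso_def isomorphic_def chom_def by blast

lemma sg_functor_isomorphic_tensor:
  "sg_functor C D F \<Longrightarrow> X \<in> Ob C \<Longrightarrow> Y \<in> Ob C \<Longrightarrow>
     isomorphic D (Tob D (FO F X) (FO F Y)) (FO F (Tob C X Y))"
  unfolding sg_functor_def isomorphic_def chom_def by blast

section \<open>Full subcategories\<close>

definition full_subcat :: "('o,'m,'x) cat_scheme \<Rightarrow> 'o set \<Rightarrow> 'o set \<times> 'm set" where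
  "full_subcat C S = (S, {f \<in> Ar C. Dom C f \<in> S \<and> Cod C f \<in> S})"

lemma full_subcat_simps [simp]:
  "fst (full_subcat C S) = S"
  "f \<in> snd (full_subcat C S) \<longleftrightarrow> f \<in> Ar C \<and> Dom C f \<in> S \<and> Cod C f \<in> S"
  by (simp_all add: full_subcat_def)

lemma sc_inter_full_subcat [simp]:
  "sc_inter (full_subcat C S) (full_subcat C S') = full_subcat C (S \<inter> S')"
  by (auto simp: sc_inter_def full_subcat_def)

lemma subcat_simps [simp]:
  "Ob (subcat C D) = fst D" "Ar (subcat C D) = snd D" "Dom (subcat C D) = Dom C"
  "Cod (subcat C D) = Cod C" "Cmp (subcat C D) = Cmp C" "Idt (subcat C D) = Idt C"
  by (simp_all add: subcat_def)

lemma subcat_scat_simps [simp]: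
  fixes C :: "('o,'m,'x) scat_scheme"
  shows "Tob (subcat C D) = Tob C" "Tar (subcat C D) = Tar C" "Asc (subcat C D) = Asc C"
  by (simp_all add: subcat_def)

lemma subcat_subcat [simp]: "subcat (subcat C D) E = subcat C E"
  by (simp add: subcat_def)

lemma id_sf_subcat [simp]: "id_sf (subcat C D) = id_sf C"
  by (simp add: id_sf_def)

lemma comp_sf_subcat [simp]: "comp_sf (subcat C D) = comp_sf C"
  by (simp add: comp_sf_def fun_eq_iff)

lemma cat_iso_full_subcat:
  assumes "category C"
  shows "cat_iso (subcat C (full_subcat C S)) f \<longleftrightarrow> cat_iso C f \<and> Dom C f \<in> S \<and> Cod C f \<in> S"
proof
  assume f: "cat_iso C f \<and> Dom C f \<in> S \<and> Cod C f \<in> S"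
  then obtain g where "g \<in> chom C (Cod C f) (Dom C f)"
    "Cmp C g f = Idt C (Dom C f)" "Cmp C f g = Idt C (Cod C f)"
    using cat_iso_inverse[OF assms] by blast
  with f show "cat_iso (subcat C (full_subcat C S)) f"
    unfolding cat_iso_def chom_def by (intro conjI bexI[of _ g]) auto
next
  assume "cat_iso (subcat C (full_subcat C S)) f"
  then show "cat_iso C f \<and> Dom C f \<in> S \<and> Cod C f \<in> S"
    unfolding cat_iso_def chom_def by auto
qed

lemma category_full_subcat:
  assumes "category C" and "S \<subseteq> Ob C"
  shows "category (subcat C (full_subcat C S))"
  using assms unfolding category_def by (auto simp: subset_iff)

lemma semigroupal_full_subcat:
  assumes sg: "semigroupal C" and S: "S \<subseteq> Ob C"
    and tensor: "\<And>X Y. X \<in> S \<Longrightarrow> Y \<in> S \<Longrightarrow> Tob C X Y \<in> S"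
  shows "semigroupal (subcat C (full_subcat C S))"
proof -
  have cat: "category C"
    using sg unfolding semigroupal_def by blast
  show ?thesis
    using sg S tensor category_full_subcat[OF cat S] unfolding semigroupal_def
    by (auto simp: chom_def cat_iso_full_subcat[OF cat] subset_iff)
qed

lemma sc_ideal_full_subcat:
  fixes C :: "('o,'m,'x) scat_scheme"
  assumes cat: "category C" and S: "S \<subseteq> Ob C" and S': "S' \<subseteq> S"
    and iso: "\<And>X Y. X \<in> S' \<Longrightarrow> isomorphic C X Y \<Longrightarrow> Y \<in> S'"
    and tensor: "\<And>X Y. X \<in> S' \<Longrightarrow> Y \<in> S \<Longrightarrow> Tob C X Y \<in> S' \<and> Tob C Y X \<in> S'"
  shows "sc_ideal (subcat C (full_subcat C S)) (full_subcat C S')"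
proof -
  have "Cod C f \<in> S'" if "cat_iso C f" "Dom C f \<in> S'" for f
    using iso that unfolding isomorphic_def by blast
  then show ?thesis
    using S S' tensor cat_Idt[OF cat] cat_Cmp[OF cat]
    unfolding sc_ideal_def is_subcategory_def iso_closed_def chom_def
    by (auto simp: cat_iso_full_subcat[OF cat] cat_iso_Ar)
qed

lemma is_functor_full_subcat:
  assumes "is_functor C D F" and "S1 \<subseteq> Ob C" and "\<And>X. X \<in> S1 \<Longrightarrow> FO F X \<in> S2"
  shows "is_functor (subcat C (full_subcat C S1)) (subcat D (full_subcat D S2)) F"
  using assms unfolding is_functor_def chom_def by (auto simp: subset_iff)

lemma sg_functor_full_subcat:
  assumes "category D" and F: "sg_functor C D F" and S1: "S1 \<subseteq> Ob C"
    and "\<And>X Y. X \<in> S1 \<Longrightarrow> Y \<in> S1 \<Longrightarrow> Tob C X Y \<in> S1"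
    and "\<And>X Y. X \<in> S2 \<Longrightarrow> Y \<in> S2 \<Longrightarrow> Tob D X Y \<in> S2"
    and maps: "\<And>X. X \<in> S1 \<Longrightarrow> FO F X \<in> S2"
  shows "sg_functor (subcat C (full_subcat C S1)) (subcat D (full_subcat D S2)) F"
proof -
  have "is_functor (subcat C (full_subcat C S1)) (subcat D (full_subcat D S2)) F"
    using F S1 maps is_functor_full_subcat unfolding sg_functor_def by blast
  with assms show ?thesis
    unfolding sg_functor_def by (auto simp: chom_def cat_iso_full_subcat subset_iff)
qed

lemma sg_equiv_full_subcat:
  assumes D: "category D" and F: "sg_equiv C D F"
    and S1: "S1 \<subseteq> Ob C" and S2: "S2 \<subseteq> Ob D"
    and tensor1: "\<And>X Y. X \<in> S1 \<Longrightarrow> Y \<in> S1 \<Longrightarrow> Tob C X Y \<in> S1"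
    and tensor2: "\<And>X Y. X \<in> S2 \<Longrightarrow> Y \<in> S2 \<Longrightarrow> Tob D X Y \<in> S2"
    and maps: "\<And>X. X \<in> S1 \<Longrightarrow> FO F X \<in> S2"
    and ess_surj: "\<And>Y. Y \<in> S2 \<Longrightarrow> \<exists>X\<in>S1. isomorphic D (FO F X) Y"
  shows "sg_equiv (subcat C (full_subcat C S1)) (subcat D (full_subcat D S2)) F"
proof -
  have "sg_functor (subcat C (full_subcat C S1)) (subcat D (full_subcat D S2)) F"
    using sg_functor_full_subcat[OF D _ S1 tensor1 tensor2 maps] F
    unfolding sg_equiv_def by blast
  moreover have "\<exists>X\<in>S1. \<exists>i\<in>chom (subcat D (full_subcat D S2)) (FO F X) Y.
      cat_iso (subcat D (full_subcat D S2)) i" if "Y \<in> S2" for Y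
    using ess_surj[OF that] that maps cat_iso_Ar
    unfolding isomorphic_def chom_def by (fastforce simp: cat_iso_full_subcat[OF D])
  moreover have "\<exists>f\<in>chom (subcat C (full_subcat C S1)) X Y. FA F f = g"
    if "X \<in> S1" "Y \<in> S1" "g \<in> chom (subcat D (full_subcat D S2)) (FO F X) (FO F Y)" for X Y g
  proof -
    have "X \<in> Ob C" "Y \<in> Ob C" "g \<in> chom D (FO F X) (FO F Y)"
      using that S1 unfolding chom_def by auto
    then obtain f where "f \<in> chom C X Y" "FA F f = g"
      using F unfolding sg_equiv_def by blast
    with that show ?thesis
      unfolding chom_def by auto
  qed
  moreover have "f = f'"
    if "X \<in> S1" "Y \<in> S1" "f \<in> chom C X Y" "f' \<in> chom C X Y" "FA F f = FA F f'" for X Y f f'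
    using F S1 that unfolding sg_equiv_def by blast
  ultimately show ?thesis
    unfolding sg_equiv_def chom_def by auto
qed

lemma sg_nat_iso_full_subcat:
  assumes "category D" and "sg_nat_iso C D F F' \<eta>" and "S1 \<subseteq> Ob C"
    and "\<And>X. X \<in> S1 \<Longrightarrow> FO F X \<in> S2" and "\<And>X. X \<in> S1 \<Longrightarrow> FO F' X \<in> S2"
  shows "sg_nat_iso (subcat C (full_subcat C S1)) (subcat D (full_subcat D S2)) F F' \<eta>"
  using assms unfolding sg_nat_iso_def nat_iso_def
  by (auto simp: chom_def cat_iso_full_subcat subset_iff)

lemma sc_ideal_eq_full_subcat: "sc_ideal C I \<Longrightarrow> I = full_subcat C (fst I)"
  unfolding sc_ideal_def is_subcategory_def full_subcat_def by (cases I) auto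

lemma sf_image_full_subcat:
  assumes F: "is_functor C D F" and S: "S \<subseteq> Ob C"
    and full: "\<forall>X\<in>Ob C. \<forall>Y\<in>Ob C. \<forall>g\<in>chom D (FO F X) (FO F Y). \<exists>f\<in>chom C X Y. FA F f = g"
  shows "sf_image F (full_subcat C S) = full_subcat D (FO F ` S)"
proof -
  have "FA F ` snd (full_subcat C S) \<subseteq> snd (full_subcat D (FO F ` S))"
    using F unfolding is_functor_def chom_def by auto
  moreover have "g \<in> FA F ` snd (full_subcat C S)" if "g \<in> snd (full_subcat D (FO F ` S))" for g
  proof -
    from that have "g \<in> Ar D" "Dom D g \<in> FO F ` S" "Cod D g \<in> FO F ` S"
      by simp_all
    then obtain X Y where "X \<in> S" "Y \<in> S" "g \<in> chom D (FO F X) (FO F Y)"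
      unfolding chom_def by blast
    moreover from this obtain f where "f \<in> chom C X Y" "FA F f = g"
      using full S by blast
    ultimately show ?thesis
      unfolding chom_def by auto
  qed
  ultimately show ?thesis
    unfolding sf_image_def by (auto simp: full_subcat_def)
qed

section \<open>Closure under isomorphisms\<close>

lemma is_subcategory_full_subcat:
  assumes cat: "category C" and S: "S \<subseteq> Ob C"
  shows "is_subcategory C (full_subcat C S)"
proof -
  have "Idt C X \<in> snd (full_subcat C S)" if "X \<in> S" for X
    using cat_Idt[OF cat, of X] S that unfolding chom_def by auto
  moreover have "Cmp C g f \<in> snd (full_subcat C S)"
    if "f \<in> snd (full_subcat C S)" "g \<in> snd (full_subcat C S)" "Cod C f = Dom C g" for f g
    using cat_Cmp[OF cat, of f "Dom C f" "Cod C f" g "Cod C g"] that unfolding chom_def by auto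
  ultimately show ?thesis
    unfolding is_subcategory_def using S by auto
qed

lemma iso_closed_full_subcat:
  assumes "\<And>X Y. X \<in> S \<Longrightarrow> isomorphic C X Y \<Longrightarrow> Y \<in> S"
  shows "iso_closed C (full_subcat C S)"
  using assms unfolding iso_closed_def isomorphic_def by (auto dest: cat_iso_Ar)

lemma iso_closed_subcat_contains_conjugates:
  assumes cat: "category C" and sub: "is_subcategory C E" and closed: "iso_closed C E"
    and A_E: "A \<subseteq> fst E" and arrows_A: "snd (full_subcat C A) \<subseteq> snd E"
  shows "snd (full_subcat C {Y. \<exists>X\<in>A. isomorphic C X Y}) \<subseteq> snd E"
proof
  fix h assume "h \<in> snd (full_subcat C {Y. \<exists>X\<in>A. isomorphic C X Y})"
  then obtain X X' where h: "h \<in> Ar C" "X \<in> A" "X' \<in> A"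
    "isomorphic C X (Dom C h)" "isomorphic C X' (Cod C h)"
    by auto
  have h_hom: "h \<in> chom C (Dom C h) (Cod C h)"
    using h(1) unfolding chom_def by simp
  obtain i j where i: "cat_iso C i" "i \<in> chom C X (Dom C h)"
    and j: "cat_iso C j" "j \<in> chom C X' (Cod C h)"
    using h(4,5) unfolding isomorphic_def chom_def by (auto dest: cat_iso_Ar)
  obtain i' k where i': "cat_iso C i'" "i' \<in> chom C (Dom C h) X"
    and k: "k \<in> chom C X X'" and h_eq: "h = Cmp C j (Cmp C k i')"
    by (rule cat_conjugate_by_isos[OF cat i j h_hom])
  have "Dom C h \<in> fst E"
    using iso_closed_isomorphic[OF closed _ h(4)] A_E h(2) by blast
  then have i'_E: "i' \<in> snd E"
    using closed i' unfolding iso_closed_def chom_def by auto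
  have j_E: "j \<in> snd E"
    using closed j A_E h(3) unfolding iso_closed_def chom_def by auto
  have k_E: "k \<in> snd E"
    using arrows_A k h(2,3) unfolding chom_def by auto
  have "Cmp C k i' \<in> snd E" "Cmp C k i' \<in> chom C (Dom C h) X'"
    using sub i'_E k_E i'(2) k cat_Cmp[OF cat i'(2) k]
    unfolding is_subcategory_def chom_def by auto
  then show "h \<in> snd E"
    using sub j_E j(2) unfolding h_eq is_subcategory_def chom_def by auto
qed

lemma iso_closure_full_subcat:
  assumes cat: "category C" and A: "A \<subseteq> Ob C"
  shows "iso_closure C (full_subcat C A) = full_subcat C {Y. \<exists>X\<in>A. isomorphic C X Y}"
proof -
  define H where "H = {Y. \<exists>X\<in>A. isomorphic C X Y}"
  define \<E> where "\<E> = {E. is_subcategory C E \<and> iso_closed C E \<and>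
    fst (full_subcat C A) \<subseteq> fst E \<and> snd (full_subcat C A) \<subseteq> snd E}"
  have A_H: "A \<subseteq> H" and H_Ob: "H \<subseteq> Ob C"
    unfolding H_def using A isomorphic_refl[OF cat] isomorphic_Ob[OF cat] by blast+
  have H_closed: "Y \<in> H" if "X \<in> H" "isomorphic C X Y" for X Y
    using that isomorphic_trans[OF cat] unfolding H_def by blast
  have H_mem: "full_subcat C H \<in> \<E>"
    unfolding \<E>_def using A_H is_subcategory_full_subcat[OF cat H_Ob]
      iso_closed_full_subcat[OF H_closed] by auto
  have H_lower: "H \<subseteq> fst E" if "E \<in> \<E>" for E
    using that iso_closed_isomorphic[of C E] unfolding \<E>_def H_def by auto
  have arrows_lower: "snd (full_subcat C H) \<subseteq> snd E" if "E \<in> \<E>" for E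
    using that iso_closed_subcat_contains_conjugates[OF cat, of E A] unfolding \<E>_def H_def by auto
  have "\<Inter>(fst ` \<E>) = H"
    using INF_lower[OF H_mem, of fst] INF_greatest[of \<E> H fst, OF H_lower]
    by (intro antisym) simp_all
  moreover have "\<Inter>(snd ` \<E>) = snd (full_subcat C H)"
    using INF_lower[OF H_mem, of snd] INF_greatest[of \<E> _ snd, OF arrows_lower]
    by (intro antisym) simp_all
  ultimately have "iso_closure C (full_subcat C A) = (H, snd (full_subcat C H))"
    unfolding iso_closure_def Let_def \<E>_def[symmetric] by simp
  then show ?thesis
    unfolding H_def full_subcat_def by simp
qed

section \<open>The partial action induced on an ideal\<close>

locale ideal_of_action = group G for G (structure) +
  fixes C :: "('o,'m) scat" and T :: "'g \<Rightarrow> ('o,'m) sfun"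
    and \<gamma> :: "'g \<Rightarrow> 'g \<Rightarrow> 'o \<Rightarrow> 'm" and u :: "'o \<Rightarrow> 'm" and I :: "'o set \<times> 'm set"
  assumes semigroupal: "semigroupal C" and action: "sg_action G C T \<gamma> u" and ideal: "sc_ideal C I"
begin

abbreviation S :: "'o set" where "S \<equiv> fst I"

lemma category: "category C"
  using semigroupal unfolding semigroupal_def by blast

lemma S_Ob: "S \<subseteq> Ob C"
  using ideal unfolding sc_ideal_def is_subcategory_def by blast

lemma S_isomorphic: "X \<in> S \<Longrightarrow> isomorphic C X Y \<Longrightarrow> Y \<in> S"
  using ideal iso_closed_isomorphic[of C I X Y] unfolding sc_ideal_def by blast

lemma S_tensor: "X \<in> S \<Longrightarrow> Y \<in> Ob C \<Longrightarrow> Tob C X Y \<in> S \<and> Tob C Y X \<in> S"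
  using ideal unfolding sc_ideal_def by blast

lemma T_equiv: "g \<in> carrier G \<Longrightarrow> sg_equiv C C (T g)"
  using action unfolding sg_action_def by blast

lemma T_functor: "g \<in> carrier G \<Longrightarrow> is_functor C C (T g)"
  using T_equiv unfolding sg_equiv_def sg_functor_def by blast

lemma T_Ob: "g \<in> carrier G \<Longrightarrow> X \<in> Ob C \<Longrightarrow> FO (T g) X \<in> Ob C"
  using T_functor unfolding is_functor_def by blast

lemma T_isomorphic:
  "g \<in> carrier G \<Longrightarrow> isomorphic C X Y \<Longrightarrow> isomorphic C (FO (T g) X) (FO (T g) Y)"
  using functor_isomorphic[OF category T_functor] .

lemma T_T_isomorphic:
  assumes "g \<in> carrier G" "h \<in> carrier G" "X \<in> Ob C"
  shows "isomorphic C (FO (T g) (FO (T h) X)) (FO (T (g \<otimes> h)) X)"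
proof -
  have "nat_iso C C (comp_sf C (T g) (T h)) (T (g \<otimes> h)) (\<gamma> g h)"
    using action assms unfolding sg_action_def sg_nat_iso_def by blast
  from nat_iso_isomorphic[OF this assms(3)] show ?thesis
    by (simp add: comp_sf_def)
qed

lemma T_one_isomorphic: "X \<in> Ob C \<Longrightarrow> isomorphic C X (FO (T \<one>) X)"
  using action nat_iso_isomorphic[of C C "id_sf C" "T \<one>" u X]
  unfolding sg_action_def sg_nat_iso_def by (simp add: id_sf_def)

lemma T_T_inv_isomorphic:
  assumes g: "g \<in> carrier G" and Y: "Y \<in> Ob C"
  shows "isomorphic C (FO (T g) (FO (T (inv g)) Y)) Y"
proof -
  have "isomorphic C (FO (T g) (FO (T (inv g)) Y)) (FO (T \<one>) Y)"
    using T_T_isomorphic[of g "inv g" Y] g Y by simp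
  then show ?thesis
    using isomorphic_trans[OF category] isomorphic_sym[OF category] T_one_isomorphic[OF Y]
    by blast
qed

lemma T_tensor_isomorphic:
  "g \<in> carrier G \<Longrightarrow> X \<in> Ob C \<Longrightarrow> Y \<in> Ob C \<Longrightarrow>
    isomorphic C (Tob C (FO (T g) X) (FO (T g) Y)) (FO (T g) (Tob C X Y))"
  using T_equiv sg_functor_isomorphic_tensor[of C C "T g" X Y] unfolding sg_equiv_def by blast

lemma T_in_S_isomorphic:
  "g \<in> carrier G \<Longrightarrow> isomorphic C X Y \<Longrightarrow> FO (T g) X \<in> S \<Longrightarrow> FO (T g) Y \<in> S"
  by (erule S_isomorphic[OF _ T_isomorphic])

lemma T_T_in_S:
  assumes "g \<in> carrier G" "h \<in> carrier G" "X \<in> Ob C"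
  shows "FO (T g) (FO (T h) X) \<in> S \<longleftrightarrow> FO (T (g \<otimes> h)) X \<in> S"
  using T_T_isomorphic[OF assms] isomorphic_sym[OF category] S_isomorphic by meson

lemma T_one_in_S: "X \<in> Ob C \<Longrightarrow> FO (T \<one>) X \<in> S \<longleftrightarrow> X \<in> S"
  using T_one_isomorphic isomorphic_sym[OF category] S_isomorphic by meson

text \<open>The objects of C_g; Cob_eq_iso_closure_image identifies them with those of
  I \<inter> closure(T_g(I)).\<close>
definition Cob where "Cob g = {X \<in> S. FO (T (inv g)) X \<in> S}"

lemma Cob_subset: "Cob g \<subseteq> S"
  unfolding Cob_def by blast

lemma Cob_Ob: "Cob g \<subseteq> Ob C"
  using Cob_subset S_Ob by blast

lemma Cob_one: "Cob \<one> = S"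
  unfolding Cob_def using S_Ob T_one_in_S by auto

lemma Cob_isomorphic: "g \<in> carrier G \<Longrightarrow> X \<in> Cob g \<Longrightarrow> isomorphic C X Y \<Longrightarrow> Y \<in> Cob g"
  unfolding Cob_def using S_isomorphic T_in_S_isomorphic[of "inv g" X Y] by auto

lemma Cob_tensor:
  assumes g: "g \<in> carrier G" and X: "X \<in> Cob g" and Y: "Y \<in> Ob C"
  shows "Tob C X Y \<in> Cob g \<and> Tob C Y X \<in> Cob g"
proof -
  have X_S: "X \<in> S" and TX_S: "FO (T (inv g)) X \<in> S" and X_Ob: "X \<in> Ob C"
    using X S_Ob unfolding Cob_def by auto
  have TY: "FO (T (inv g)) Y \<in> Ob C"
    using T_Ob g Y by simp
  have "FO (T (inv g)) (Tob C X Y) \<in> S"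
    using S_isomorphic[OF conjunct1[OF S_tensor[OF TX_S TY]]]
      T_tensor_isomorphic[of "inv g" X Y] g X_Ob Y by simp
  moreover have "FO (T (inv g)) (Tob C Y X) \<in> S"
    using S_isomorphic[OF conjunct2[OF S_tensor[OF TX_S TY]]]
      T_tensor_isomorphic[of "inv g" Y X] g X_Ob Y by simp
  ultimately show ?thesis
    unfolding Cob_def using S_tensor[OF X_S Y] by simp
qed

lemma T_maps_Cob:
  assumes g: "g \<in> carrier G" and h: "h \<in> carrier G" and X: "X \<in> Cob (inv g) \<inter> Cob h"
  shows "FO (T g) X \<in> Cob g \<inter> Cob (g \<otimes> h)"
proof -
  have X_S: "X \<in> S" and TX_S: "FO (T g) X \<in> S" and X_Ob: "X \<in> Ob C"
    and "FO (T (inv h)) X \<in> S"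
    using X g S_Ob unfolding Cob_def by auto
  moreover have "inv g \<otimes> g = \<one>" "inv (g \<otimes> h) \<otimes> g = inv h"
    using g h by (simp_all add: inv_mult_group m_assoc)
  ultimately show ?thesis
    unfolding Cob_def using g h T_T_in_S T_one_in_S by simp
qed

lemma T_ess_surj_Cob:
  assumes g: "g \<in> carrier G" and h: "h \<in> carrier G" and Y: "Y \<in> Cob g \<inter> Cob (g \<otimes> h)"
  shows "\<exists>X\<in>Cob (inv g) \<inter> Cob h. isomorphic C (FO (T g) X) Y"
proof
  have Y_S: "Y \<in> S" and Y_Ob: "Y \<in> Ob C" and "FO (T (inv g)) Y \<in> S"
    and "FO (T (inv (g \<otimes> h))) Y \<in> S"
    using Y S_Ob unfolding Cob_def by auto
  moreover have "g \<otimes> inv g = \<one>" "inv h \<otimes> inv g = inv (g \<otimes> h)"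
    using g h by (simp_all add: inv_mult_group)
  ultimately show "FO (T (inv g)) Y \<in> Cob (inv g) \<inter> Cob h"
    unfolding Cob_def using g h T_T_in_S T_one_in_S by simp
  show "isomorphic C (FO (T g) (FO (T (inv g)) Y)) Y"
    using T_T_inv_isomorphic[OF g Y_Ob] .
qed

lemma Cob_eq_iso_closure_image:
  assumes g: "g \<in> carrier G"
  shows "Cob g = S \<inter> {Y. \<exists>X\<in>FO (T g) ` S. isomorphic C X Y}"
proof (intro equalityI subsetI IntI CollectI)
  fix Y assume Y: "Y \<in> Cob g"
  then have Y_S: "Y \<in> S" and Y_Ob: "Y \<in> Ob C" and TY_S: "FO (T (inv g)) Y \<in> S"
    using S_Ob unfolding Cob_def by auto
  with T_T_inv_isomorphic[OF g Y_Ob] show "\<exists>X\<in>FO (T g) ` S. isomorphic C X Y"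
    by blast
  show "Y \<in> S"
    by (fact Y_S)
next
  fix Y assume "Y \<in> S \<inter> {Y. \<exists>X\<in>FO (T g) ` S. isomorphic C X Y}"
  then obtain Z where Y_S: "Y \<in> S" and Z_S: "Z \<in> S" and ZY: "isomorphic C (FO (T g) Z) Y"
    by blast
  have "FO (T (inv g)) (FO (T g) Z) \<in> S"
    using T_T_in_S[of "inv g" g Z] T_one_in_S[of Z] g Z_S S_Ob by auto
  then have "FO (T (inv g)) Y \<in> S"
    using T_in_S_isomorphic[OF _ ZY] g by simp
  with Y_S show "Y \<in> Cob g"
    unfolding Cob_def by blast
qed

lemma iso_closure_T_image:
  assumes g: "g \<in> carrier G"
  shows "sc_inter I (iso_closure C (sf_image (T g) I)) = full_subcat C (Cob g)"
proof -
  have "sf_image (T g) (full_subcat C S) = full_subcat C (FO (T g) ` S)"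
    using T_equiv[OF g] unfolding sg_equiv_def
    by (intro sf_image_full_subcat[OF T_functor[OF g] S_Ob]) blast
  moreover have "FO (T g) ` S \<subseteq> Ob C"
    using T_Ob[OF g] S_Ob by blast
  ultimately have "sc_inter (full_subcat C S) (iso_closure C (sf_image (T g) (full_subcat C S))) =
      full_subcat C (Cob g)"
    using iso_closure_full_subcat[OF category] Cob_eq_iso_closure_image[OF g] by simp
  then show ?thesis
    by (simp only: sc_ideal_eq_full_subcat[OF ideal, symmetric])
qed

lemma semigroupal_ideal: "semigroupal (subcat C (full_subcat C S))"
  using S_tensor S_Ob by (intro semigroupal_full_subcat[OF semigroupal S_Ob]) blast

lemma sc_ideal_Cob: "g \<in> carrier G \<Longrightarrow> sc_ideal (subcat C (full_subcat C S)) (full_subcat C (Cob g))"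
  using Cob_isomorphic Cob_tensor S_Ob
  by (intro sc_ideal_full_subcat[OF category S_Ob Cob_subset]) blast+

lemma sg_equiv_Cob:
  assumes g: "g \<in> carrier G" and h: "h \<in> carrier G"
  shows "sg_equiv (subcat C (full_subcat C (Cob (inv g) \<inter> Cob h)))
                  (subcat C (full_subcat C (Cob g \<inter> Cob (g \<otimes> h)))) (T g)"
proof (rule sg_equiv_full_subcat[OF category T_equiv[OF g]])
  show "Cob (inv g) \<inter> Cob h \<subseteq> Ob C" "Cob g \<inter> Cob (g \<otimes> h) \<subseteq> Ob C"
    using Cob_Ob by blast+
  show "Tob C X Y \<in> Cob (inv g) \<inter> Cob h"
    if "X \<in> Cob (inv g) \<inter> Cob h" "Y \<in> Cob (inv g) \<inter> Cob h" for X Y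
    using that Cob_tensor g h Cob_Ob by blast
  show "Tob C X Y \<in> Cob g \<inter> Cob (g \<otimes> h)"
    if "X \<in> Cob g \<inter> Cob (g \<otimes> h)" "Y \<in> Cob g \<inter> Cob (g \<otimes> h)" for X Y
    using that Cob_tensor g h Cob_Ob by blast
qed (use T_maps_Cob[OF g h] T_ess_surj_Cob[OF g h] in auto)

lemma sg_equiv_Cob_inv:
  "g \<in> carrier G \<Longrightarrow> sg_equiv (subcat C (full_subcat C (Cob (inv g)))) (subcat C (full_subcat C (Cob g))) (T g)"
  using sg_equiv_Cob[of g \<one>] Cob_one Cob_subset by (simp add: Int_absorb2)

lemma sg_nat_iso_Cob:
  assumes g: "g \<in> carrier G" and h: "h \<in> carrier G"
  shows "sg_nat_iso (subcat C (full_subcat C (Cob (inv h) \<inter> Cob (inv h \<otimes> inv g))))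
           (subcat C (full_subcat C (Cob g \<inter> Cob (g \<otimes> h))))
           (comp_sf C (T g) (T h)) (T (g \<otimes> h)) (\<gamma> g h)"
proof (rule sg_nat_iso_full_subcat[OF category])
  show "sg_nat_iso C C (comp_sf C (T g) (T h)) (T (g \<otimes> h)) (\<gamma> g h)"
    using action g h unfolding sg_action_def by blast
  show "Cob (inv h) \<inter> Cob (inv h \<otimes> inv g) \<subseteq> Ob C"
    using Cob_Ob by blast
  fix X assume X: "X \<in> Cob (inv h) \<inter> Cob (inv h \<otimes> inv g)"
  have "h \<otimes> (inv h \<otimes> inv g) = inv g"
    using g h by (simp add: m_assoc[symmetric])
  moreover have "inv h \<otimes> inv g = inv (g \<otimes> h)"
    using g h by (simp add: inv_mult_group)
  moreover have "g \<otimes> h \<otimes> inv h = g"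
    using g h by (simp add: m_assoc)
  ultimately show "FO (comp_sf C (T g) (T h)) X \<in> Cob g \<inter> Cob (g \<otimes> h)"
    "FO (T (g \<otimes> h)) X \<in> Cob g \<inter> Cob (g \<otimes> h)"
    using X T_maps_Cob[of h "inv h \<otimes> inv g" X] T_maps_Cob[OF g h] T_maps_Cob[of "g \<otimes> h" "inv h" X] g h
    by (auto simp: comp_sf_def)
qed

lemma sg_nat_iso_unit: "sg_nat_iso (subcat C (full_subcat C S)) (subcat C (full_subcat C S)) (id_sf C) (T \<one>) u"
proof (rule sg_nat_iso_full_subcat[OF category _ S_Ob])
  show "sg_nat_iso C C (id_sf C) (T \<one>) u"
    using action unfolding sg_action_def by blast
qed (use S_Ob T_one_in_S in \<open>auto simp: id_sf_def\<close>)

lemma \<gamma>_assoc: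
  "g \<in> carrier G \<Longrightarrow> h \<in> carrier G \<Longrightarrow> k \<in> carrier G \<Longrightarrow> X \<in> Ob C \<Longrightarrow>
    Cmp C (\<gamma> (g \<otimes> h) k X) (\<gamma> g h (FO (T k) X)) = Cmp C (\<gamma> g (h \<otimes> k) X) (FA (T g) (\<gamma> h k X))"
  using action unfolding sg_action_def by blast

lemma \<gamma>_u_inverse:
  "g \<in> carrier G \<Longrightarrow> X \<in> Ob C \<Longrightarrow>
    Cmp C (u (FO (T g) X)) (\<gamma> \<one> g X) = Idt C (FO (T \<one>) (FO (T g) X)) \<and>
    Cmp C (\<gamma> \<one> g X) (u (FO (T g) X)) = Idt C (FO (T g) X) \<and>
    Cmp C (FA (T g) (u X)) (\<gamma> g \<one> X) = Idt C (FO (T g) (FO (T \<one>) X)) \<and>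
    Cmp C (\<gamma> g \<one> X) (FA (T g) (u X)) = Idt C (FO (T g) X)"
  using action unfolding sg_action_def by blast

end

theorem theorem3p10:
  fixes G :: "('g,'b) monoid_scheme" and C :: "('o,'m) scat"
    and T :: "'g \<Rightarrow> ('o,'m) sfun" and \<gamma> :: "'g \<Rightarrow> 'g \<Rightarrow> 'o \<Rightarrow> 'm" and u :: "'o \<Rightarrow> 'm"
    and I :: "'o set \<times> 'm set"
  assumes "group G" and "semigroupal C" and "sg_action G C T \<gamma> u" and "sc_ideal C I"
  shows "partial_action G (subcat C I)
           (\<lambda>g. sc_inter I (iso_closure C (sf_image (T g) I))) T \<gamma> u"
proof -
  interpret ideal_of_action G C T \<gamma> u I
    by (rule ideal_of_action.intro[OF assms(1) ideal_of_action_axioms.intro[OF assms(2-4)]])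
  have I_full: "subcat C I = subcat C (full_subcat C (fst I))"
    using arg_cong[OF sc_ideal_eq_full_subcat[OF ideal], of "subcat C"] .
  show ?thesis
    unfolding partial_action_def I_full
    by (auto simp: iso_closure_T_image Cob_one prod_eq_iff semigroupal_ideal sc_ideal_Cob
        sg_equiv_Cob_inv sg_nat_iso_unit sg_equiv_Cob sg_nat_iso_Cob
        \<gamma>_assoc \<gamma>_u_inverse Cob_Ob[THEN subsetD])
qed

end
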